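(* Let $p$ be a $\mathbb Z_2$-homogeneous monic element of $\mathcal{A}_E$ such that the associative composition $(p,t_{ij})_w$ is defined for some $w\in X^*$, where $t_{ij}=[e_i,f_j]-\delta_{ij}h_i$. Then $(p,t_{ij})_w\equiv(p)\tilde\partial_j\bmod(\{p\}\cup W,w)$.
   Context: Let $k$ be a field with $\mathrm{char}(k)\ne2,3$. $\Omega=\{1,\dots,r\}$, $\tau\subseteq\Omega$, $A=(a_{ij})_{i,j\in\Omega}$ a generalized Cartan matrix (entries $a_{ii}\in\{0,2\}$ with $a_{ii}=0\Rightarrow i\in\tau$; $a_{ij}\in\mathbb Z_{\le0}$ for $j\neq i$ when $a_{ii}\ne0$; $a_{ij}=0\Rightarrow a_{ji}=0$; $a_{ii}=2$, $i\in\tau\Rightarrow a_{ij}\in2\mathbb Z$). $X=E\cup H\cup F$, $E=\{e_i\}$, $H=\{h_i\}$, $F=\{f_i\}$, with $\deg i=\bar1$ iff $i\in\tau$, $\deg e_i=\deg f_i=\deg i$, $\deg h_i=\bar0$; order $e_i\succ h_j\succ f_k$ and $e_i\succ e_j$, $h_i\succ h_j$, $f_i\succ f_j$ iff $i>j$. $\mathcal A_E\subset\mathcal A_X$ are free associative algebras, with superbracket $[x,y]=xy-(-1)^{|x||y|}yx$. $W$ is the set $\{[h_i,h_j]\,(i>j),\ [e_i,f_j]-\delta_{ij}h_i,\ [e_j,h_i]+a_{ij}e_j,\ [h_i,f_j]+a_{ij}f_j\}$. The differential substitution $\tilde\partial_j$ is the linear map on $\mathcal A_E$ (with values in $\mathcal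 A_X$, written on the right) determined by $(e_i)\tilde\partial_j=\delta_{ij}h_j$ and $(uv)\tilde\partial_j=u\,(v)\tilde\partial_j+(-1)^{(\deg j)(\deg v)}(u)\tilde\partial_j\,v$ for homogeneous $u,v\in\mathcal A_E$. Orders: $X^*$ associative words; $u<1$ for nonempty $u$, $xu'<yv'$ iff $x\prec y$ or ($x=y$, $u'<v'$); $u\ll v$ iff $l(u)<l(v)$ or ($l(u)=l(v)$, $u<v$); $\bar p$ is the $\ll$-largest word of $p$, monic means its coefficient is $1$. Associative compositions of monic $p,q$: if $\bar pa=b\bar q=w$, $l(\bar p)>l(b)$: $(p,q)_w=pa-bq$; if $\bar p=a\bar qb=w$: $(p,q)_w=p-aqb$. $f\equiv g\bmod(S,w)$ means $f-g=\sum\alpha_ia_is_ib_i$ with $\alpha_i\in k$, $a_i,b_i\in X^*$, $s_i\in S$, $a_i\bar s_ib_i\ll w$. *)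

theory Defs
  imports "HOL-Library.Poly_Mapping"
begin

text \<open>Letters of X = E \<union> H \<union> F, indexed by natural numbers; only indices in
  \<Omega> = {1..r} are relevant (see wordX).\<close>
datatype letter = E nat | H nat | F nat

type_synonym word = "letter list"

text \<open>Elements of the free associative algebra A_X over k: finitely supported
  coefficient functions on words.\<close>
type_synonym 'k fa = "word \<Rightarrow>\<^sub>0 'k"

fun lrank :: "letter \<Rightarrow> nat" where
  "lrank (E _) = 2" | "lrank (H _) = 1" | "lrank (F _) = 0"

fun lidx :: "letter \<Rightarrow> nat" where
  "lidx (E i) = i" | "lidx (H i) = i" | "lidx (F i) = i"

fun isE :: "letter \<Rightarrow> bool" where
  "isE (E _) = True" | "isE _ = False"

definition lless :: "letter \<Rightarrow> letter \<Rightarrow> bool" where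
  "lless x y \<longleftrightarrow> lrank x < lrank y \<or> (lrank x = lrank y \<and> lidx x < lidx y)"

fun wless :: "word \<Rightarrow> word \<Rightarrow> bool" where
  "wless [] v = False"
| "wless (x # u) [] = True"
| "wless (x # u) (y # v) = (lless x y \<or> (x = y \<and> wless u v))"

definition dlless :: "word \<Rightarrow> word \<Rightarrow> bool" where
  "dlless u v \<longleftrightarrow> length u < length v \<or> (length u = length v \<and> wless u v)"

definition lead :: "'k::zero fa \<Rightarrow> word" where
  "lead p = (THE u. u \<in> Poly_Mapping.keys p \<and> (\<forall>v\<in>Poly_Mapping.keys p. v \<noteq> u \<longrightarrow> dlless v u))"

definition monic :: "'k::{zero,one} fa \<Rightarrow> bool" where
  "monic p \<longleftrightarrow> p \<noteq> 0 \<and> Poly_Mapping.lookup p (lead p) = 1"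

fun ldeg :: "nat set \<Rightarrow> letter \<Rightarrow> bool" where
  "ldeg \<tau> (E i) = (i \<in> \<tau>)" | "ldeg \<tau> (H i) = False" | "ldeg \<tau> (F i) = (i \<in> \<tau>)"

definition wdeg :: "nat set \<Rightarrow> word \<Rightarrow> bool" where
  "wdeg \<tau> u = odd (length (filter (ldeg \<tau>) u))"

definition homog :: "nat set \<Rightarrow> 'k::zero fa \<Rightarrow> bool" where
  "homog \<tau> p \<longleftrightarrow> (\<exists>d. \<forall>u\<in>Poly_Mapping.keys p. wdeg \<tau> u = d)"

definition sgnk :: "bool \<Rightarrow> 'k::comm_ring_1" where
  "sgnk b = (if b then -1 else 1)"

definition wordX :: "nat \<Rightarrow> word \<Rightarrow> bool" where
  "wordX r u \<longleftrightarrow> (\<forall>x\<in>set u. lidx x \<in> {1..r})"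

definition inAE :: "nat \<Rightarrow> 'k::zero fa \<Rightarrow> bool" where
  "inAE r p \<longleftrightarrow> (\<forall>u\<in>Poly_Mapping.keys p. wordX r u \<and> (\<forall>x\<in>set u. isE x))"

definition mon :: "word \<Rightarrow> 'k::comm_ring_1 fa" where
  "mon u = Poly_Mapping.single u 1"

definition wmulc :: "'k::comm_ring_1 \<Rightarrow> word \<Rightarrow> 'k fa \<Rightarrow> word \<Rightarrow> 'k fa" where
  "wmulc c a p b = (\<Sum>u\<in>Poly_Mapping.keys p. Poly_Mapping.single (a @ u @ b) (c * Poly_Mapping.lookup p u))"

definition sbr :: "nat set \<Rightarrow> word \<Rightarrow> word \<Rightarrow> 'k::comm_ring_1 fa" where
  "sbr \<tau> u v = mon (u @ v) - Poly_Mapping.single (v @ u) (sgnk (wdeg \<tau> u \<and> wdeg \<tau> v))"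

definition tt :: "nat set \<Rightarrow> nat \<Rightarrow> nat \<Rightarrow> 'k::comm_ring_1 fa" where
  "tt \<tau> i j = sbr \<tau> [E i] [F j] - (if i = j then mon [H i] else 0)"

definition Wset :: "nat \<Rightarrow> nat set \<Rightarrow> (nat \<Rightarrow> nat \<Rightarrow> int) \<Rightarrow> 'k::comm_ring_1 fa set" where
  "Wset r \<tau> A =
     {sbr \<tau> [H i] [H j] | i j. i \<in> {1..r} \<and> j \<in> {1..r} \<and> i > j}
   \<union> {tt \<tau> i j | i j. i \<in> {1..r} \<and> j \<in> {1..r}}
   \<union> {sbr \<tau> [E j] [H i] + Poly_Mapping.single [E j] (of_int (A i j)) | i j. i \<in> {1..r} \<and> j \<in> {1..r}}
   \<union> {sbr \<tau> [H i] [F j] + Poly_Mapping.single [F j] (of_int (A i j)) | i j. i \<in> {1..r} \<and> j \<in> {1..r}}"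

definition gcm :: "nat \<Rightarrow> nat set \<Rightarrow> (nat \<Rightarrow> nat \<Rightarrow> int) \<Rightarrow> bool" where
  "gcm r \<tau> A \<longleftrightarrow> \<tau> \<subseteq> {1..r}
     \<and> (\<forall>i\<in>{1..r}. A i i = 0 \<or> A i i = 2)
     \<and> (\<forall>i\<in>{1..r}. A i i = 0 \<longrightarrow> i \<in> \<tau>)
     \<and> (\<forall>i\<in>{1..r}. \<forall>j\<in>{1..r}. j \<noteq> i \<and> A i i \<noteq> 0 \<longrightarrow> A i j \<le> 0)
     \<and> (\<forall>i\<in>{1..r}. \<forall>j\<in>{1..r}. A i j = 0 \<longrightarrow> A j i = 0)
     \<and> (\<forall>i\<in>{1..r}. A i i = 2 \<and> i \<in> \<tau> \<longrightarrow> (\<forall>j\<in>{1..r}. even (A i j)))"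

text \<open>Differential substitution on words (unique solution of the defining rules, obtained
  by splitting x v = x \<cdot> v):  (x v)\<partial>_j = x (v)\<partial>_j + (-1)^{deg j deg v} (x)\<partial>_j v,
  (e_i)\<partial>_j = \<delta>_ij h_j; extended linearly.\<close>
fun dsubw :: "nat set \<Rightarrow> nat \<Rightarrow> word \<Rightarrow> 'k::comm_ring_1 fa" where
  "dsubw \<tau> j [] = 0"
| "dsubw \<tau> j (x # v) = wmulc 1 [x] (dsubw \<tau> j v) []
     + (if x = E j then Poly_Mapping.single (H j # v) (sgnk (j \<in> \<tau> \<and> wdeg \<tau> v)) else 0)"

definition dsub :: "nat set \<Rightarrow> nat \<Rightarrow> 'k::comm_ring_1 fa \<Rightarrow> 'k fa" where
  "dsub \<tau> j p = (\<Sum>u\<in>Poly_Mapping.keys p. wmulc (Poly_Mapping.lookup p u) [] (dsubw \<tau> j u) [])"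

definition is_comp :: "'k::comm_ring_1 fa \<Rightarrow> 'k fa \<Rightarrow> word \<Rightarrow> 'k fa \<Rightarrow> bool" where
  "is_comp p q w c \<longleftrightarrow>
     (\<exists>a b. lead p @ a = w \<and> b @ lead q = w \<and> length (lead p) > length b
            \<and> c = wmulc 1 [] p a - wmulc 1 b q [])
   \<or> (\<exists>a b. lead p = w \<and> a @ lead q @ b = w \<and> c = p - wmulc 1 a q b)"

definition congr :: "nat \<Rightarrow> 'k::comm_ring_1 fa \<Rightarrow> 'k fa \<Rightarrow> 'k fa set \<Rightarrow> word \<Rightarrow> bool" where
  "congr r f g S w \<longleftrightarrow> (\<exists>L :: ('k \<times> word \<times> 'k fa \<times> word) list.
      (\<forall>(\<alpha>, a, s, b)\<in>set L. wordX r a \<and> wordX r b \<and> s \<in> S \<and> dlless (a @ lead s @ b) w)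
    \<and> f - g = sum_list (map (\<lambda>(\<alpha>, a, s, b). wmulc \<alpha> a s b) L))"

end

theory Submission
  imports Defs
begin

(* Bracketing with f_j is a superderivation and [e_k, f_j] = t_kj + delta_kj h_k, so for a word
   v over E
     [v, f_j] = (v)D_j + sum over all factorizations v = v1 x v2 of +-v1 t_xj v2,
   where D_j is the differential substitution.  As f_j does not occur in the leading word of p,
   the composition (p, t_ij)_w can only come from the overlap lead p = u e_i, w = (lead p) f_j,
   so it equals p f_j - u t_ij; and for homogeneous p, p f_j = +-f_j p + sum_v p_v [v, f_j].
   Hence (p, t_ij)_w - (p)D_j is +-f_j p plus all the terms +-p_v v1 t_xj v2 other than u t_ij
   itself, and each of them has leading word below w because f_j is the smallest letter. *)

lemma lless_irrefl: "\<not> lless x x"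
  by (simp add: lless_def)

lemma lless_trans: "lless x y \<Longrightarrow> lless y z \<Longrightarrow> lless x z"
  by (auto simp: lless_def)

lemma lless_total: "x \<noteq> y \<Longrightarrow> lless x y \<or> lless y x"
  by (cases x; cases y) (auto simp: lless_def)

lemma wless_irrefl: "\<not> wless u u"
  by (induction u) (auto simp: lless_irrefl)

lemma wless_trans: "wless u v \<Longrightarrow> wless v z \<Longrightarrow> wless u z"
proof (induction u arbitrary: v z)
  case (Cons x u)
  then show ?case by (cases v; cases z) (auto dest: lless_trans)
qed simp

lemma wless_total: "u \<noteq> v \<Longrightarrow> wless u v \<or> wless v u"
proof (induction u arbitrary: v)
  case Nil
  then show ?case by (cases v) auto
next
  case (Cons x u)
  then show ?case by (cases v) (auto dest: lless_total)
qed

lemma dlless_irrefl: "\<not> dlless u u"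
  by (simp add: dlless_def wless_irrefl)

lemma dlless_trans: "dlless u v \<Longrightarrow> dlless v z \<Longrightarrow> dlless u z"
  by (auto simp: dlless_def intro: wless_trans)

lemma dlless_total: "u \<noteq> v \<Longrightarrow> dlless u v \<or> dlless v u"
  using wless_total by (auto simp: dlless_def)

lemma finite_has_dlless_greatest:
  "finite S \<Longrightarrow> S \<noteq> {} \<Longrightarrow> \<exists>m\<in>S. \<forall>v\<in>S. v \<noteq> m \<longrightarrow> dlless v m"
proof (induction S rule: finite_ne_induct)
  case (insert x S)
  then obtain m where "m \<in> S" "\<forall>v\<in>S. v \<noteq> m \<longrightarrow> dlless v m"
    by blast
  then show ?case
    by (metis dlless_total dlless_trans insert_iff)
qed simp

lemma lead_eqI:
  assumes "u \<in> Poly_Mapping.keys p" "\<forall>v\<in>Poly_Mapping.keys p. v \<noteq> u \<longrightarrow> dlless v u"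
  shows "lead p = u"
  unfolding lead_def
proof (rule the_equality)
  fix u' assume "u' \<in> Poly_Mapping.keys p \<and> (\<forall>v\<in>Poly_Mapping.keys p. v \<noteq> u' \<longrightarrow> dlless v u')"
  with assms show "u' = u"
    by (metis dlless_irrefl dlless_trans)
qed (use assms in blast)

lemma
  assumes "p \<noteq> 0"
  shows lead_in_keys: "lead p \<in> Poly_Mapping.keys p"
    and dlless_lead: "v \<in> Poly_Mapping.keys p \<Longrightarrow> v \<noteq> lead p \<Longrightarrow> dlless v (lead p)"
proof -
  obtain m where "m \<in> Poly_Mapping.keys p" "\<forall>v\<in>Poly_Mapping.keys p. v \<noteq> m \<longrightarrow> dlless v m"
    using finite_has_dlless_greatest[OF finite_keys] assms by auto
  moreover from this have "lead p = m"
    by (rule lead_eqI)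
  ultimately show "lead p \<in> Poly_Mapping.keys p"
    and "v \<in> Poly_Mapping.keys p \<Longrightarrow> v \<noteq> lead p \<Longrightarrow> dlless v (lead p)"
    by auto
qed

lemma wmulc_eq_sum_superset:
  assumes "finite S" "Poly_Mapping.keys p \<subseteq> S"
  shows "wmulc c a p b = (\<Sum>u\<in>S. Poly_Mapping.single (a @ u @ b) (c * Poly_Mapping.lookup p u))"
  unfolding wmulc_def
  by (rule sum.mono_neutral_left) (use assms in \<open>auto simp: in_keys_iff\<close>)

lemma wmulc_add: "wmulc c a (p + q) b = wmulc c a p b + (wmulc c a q b :: 'k::comm_ring_1 fa)"
proof -
  let ?S = "Poly_Mapping.keys p \<union> Poly_Mapping.keys q"
  have "wmulc c a (p + q) b =
      (\<Sum>u\<in>?S. Poly_Mapping.single (a @ u @ b) (c * Poly_Mapping.lookup (p + q) u))"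
    by (rule wmulc_eq_sum_superset) (simp_all add: keys_add)
  also have "\<dots> = (\<Sum>u\<in>?S. Poly_Mapping.single (a @ u @ b) (c * Poly_Mapping.lookup p u))
      + (\<Sum>u\<in>?S. Poly_Mapping.single (a @ u @ b) (c * Poly_Mapping.lookup q u))"
    by (simp add: lookup_add distrib_left single_add sum.distrib)
  also have "\<dots> = wmulc c a p b + wmulc c a q b"
    by (subst (1 2) wmulc_eq_sum_superset[of ?S]) auto
  finally show ?thesis .
qed

lemma wmulc_zero [simp]: "wmulc c a 0 b = 0"
  by (simp add: wmulc_def)

lemma wmulc_uminus: "wmulc c a (- p) b = - (wmulc c a p b :: 'k::comm_ring_1 fa)"
  by (simp add: wmulc_def single_uminus sum_negf)

lemma wmulc_diff: "wmulc c a (p - q) b = wmulc c a p b - (wmulc c a q b :: 'k::comm_ring_1 fa)"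
  using wmulc_add[of c a p "- q" b] by (simp add: wmulc_uminus)

lemma wmulc_single:
  "wmulc c a (Poly_Mapping.single u d) b = (Poly_Mapping.single (a @ u @ b) (c * d) :: 'k::comm_ring_1 fa)"
  by (simp add: wmulc_def)

lemma wmulc_sum: "wmulc c a (\<Sum>x\<in>X. f x) b = (\<Sum>x\<in>X. wmulc c a (f x) b :: 'k::comm_ring_1 fa)"
  by (induction X rule: infinite_finite_induct) (auto simp: wmulc_add)

lemma wmulc_sum_list:
  "wmulc c a (sum_list xs) b = sum_list (map (\<lambda>x. wmulc c a x b) xs :: 'k::comm_ring_1 fa list)"
  by (induction xs) (auto simp: wmulc_add)

lemma wmulc_wmulc:
  "wmulc c a (wmulc d a' p b') b = (wmulc (c * d) (a @ a') p (b' @ b) :: 'k::comm_ring_1 fa)"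
  unfolding wmulc_def[of d a' p b'] wmulc_sum
  by (simp add: wmulc_single mult.assoc wmulc_def[of "c * d"])

lemma wmulc_1_Nil_Nil [simp]: "wmulc 1 [] p [] = (p :: 'k::comm_ring_1 fa)"
proof (rule poly_mapping_eqI)
  fix v
  have "(\<Sum>u\<in>Poly_Mapping.keys p. Poly_Mapping.lookup p u when u = v) = Poly_Mapping.lookup p v"
    by (cases "v \<in> Poly_Mapping.keys p") (simp_all add: when_def in_keys_iff)
  then show "Poly_Mapping.lookup (wmulc 1 [] p []) v = Poly_Mapping.lookup p v"
    by (simp add: wmulc_def lookup_sum lookup_single eq_commute)
qed

lemma wdeg_simps [simp]: "wdeg \<tau> [] = False" "wdeg \<tau> (x # v) = (ldeg \<tau> x \<noteq> wdeg \<tau> v)"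
  by (auto simp: wdeg_def)

lemma sgnk_False [simp]: "sgnk False = 1"
  by (simp add: sgnk_def)

lemma sgnk_conj_mult: "sgnk (a \<and> b) * sgnk (a \<and> c) = (sgnk (a \<and> (b \<noteq> c)) :: 'k::comm_ring_1)"
  by (auto simp: sgnk_def)

lemma wordX_append [simp]: "wordX r (a @ b) \<longleftrightarrow> wordX r a \<and> wordX r b"
  by (auto simp: wordX_def)

lemma wordX_Cons [simp]: "wordX r (x # b) \<longleftrightarrow> lidx x \<in> {1..r} \<and> wordX r b"
  by (auto simp: wordX_def)

lemma wordX_Nil [simp]: "wordX r []"
  by (simp add: wordX_def)

lemma sbr_F:
  "sbr \<tau> v [F j] = Poly_Mapping.single (v @ [F j]) 1
     - (Poly_Mapping.single (F j # v) (sgnk (wdeg \<tau> v \<and> j \<in> \<tau>)) :: 'k::comm_ring_1 fa)"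
  by (simp add: sbr_def mon_def)

lemma tt_eq:
  "tt \<tau> k j = Poly_Mapping.single [E k, F j] 1
     - Poly_Mapping.single [F j, E k] (sgnk (k \<in> \<tau> \<and> j \<in> \<tau>))
     - (if k = j then Poly_Mapping.single [H k] 1 else (0 :: 'k::comm_ring_1 fa))"
  by (simp add: tt_def sbr_def mon_def)

lemma lead_tt: "lead (tt \<tau> k j :: 'k::comm_ring_1 fa) = [E k, F j]"
proof (rule lead_eqI)
  show "[E k, F j] \<in> Poly_Mapping.keys (tt \<tau> k j :: 'k fa)"
    by (simp add: tt_eq in_keys_iff lookup_minus lookup_single)
  have "Poly_Mapping.keys (tt \<tau> k j :: 'k fa) \<subseteq> {[E k, F j], [F j, E k], [H k]}"
    by (auto simp: tt_eq in_keys_iff lookup_minus lookup_single when_def split: if_splits)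
  then show "\<forall>v\<in>Poly_Mapping.keys (tt \<tau> k j :: 'k fa). v \<noteq> [E k, F j] \<longrightarrow> dlless v [E k, F j]"
    by (auto simp: dlless_def lless_def)
qed

lemma tt_in_Wset: "k \<in> {1..r} \<Longrightarrow> j \<in> {1..r} \<Longrightarrow> tt \<tau> k j \<in> Wset r \<tau> A"
  unfolding Wset_def by blast

definition eval_term :: "'k::comm_ring_1 \<times> word \<times> 'k fa \<times> word \<Rightarrow> 'k fa" where
  "eval_term = (\<lambda>(\<alpha>, a, s, b). wmulc \<alpha> a s b)"

lemma eval_term_simp [simp]: "eval_term (\<alpha>, a, s, b) = wmulc \<alpha> a s b"
  by (simp add: eval_term_def)

fun tt_terms :: "nat set \<Rightarrow> nat \<Rightarrow> word \<Rightarrow> ('k::comm_ring_1 \<times> word \<times> 'k fa \<times> word) list" where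
  "tt_terms \<tau> j [] = []"
| "tt_terms \<tau> j (x # v) = (sgnk (j \<in> \<tau> \<and> wdeg \<tau> v), [], tt \<tau> (lidx x) j, v)
     # map (\<lambda>(\<alpha>, a, s, b). (\<alpha>, x # a, s, b)) (tt_terms \<tau> j v)"

lemma sbr_F_eq_dsubw_plus_tt_terms:
  assumes "\<forall>x\<in>set v. isE x"
  shows "sbr \<tau> v [F j] = dsubw \<tau> j v + sum_list (map eval_term (tt_terms \<tau> j v) :: 'k::comm_ring_1 fa list)"
  using assms
proof (induction v)
  case Nil
  then show ?case by (simp add: sbr_F)
next
  case (Cons x v)
  then obtain k where x: "x = E k"
    by (cases x) auto
  let ?\<sigma> = "sgnk (j \<in> \<tau> \<and> wdeg \<tau> v) :: 'k"
  have shift: "map eval_term (map (\<lambda>(\<alpha>, a, s, b). (\<alpha>, x # a, s, b)) (tt_terms \<tau> j v))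
      = map (\<lambda>t. wmulc 1 [x] (eval_term t) []) (tt_terms \<tau> j v :: ('k \<times> _) list)"
    by (simp add: eval_term_def wmulc_wmulc split_def)
  have "sum_list (map eval_term (tt_terms \<tau> j (x # v)) :: 'k fa list)
      = wmulc ?\<sigma> [] (tt \<tau> k j) v + wmulc 1 [x] (sum_list (map eval_term (tt_terms \<tau> j v))) []"
    unfolding tt_terms.simps list.map sum_list.Cons shift
    by (simp add: eval_term_def x wmulc_sum_list comp_def)
  also have "\<dots> = wmulc ?\<sigma> [] (tt \<tau> k j) v + wmulc 1 [x] (sbr \<tau> v [F j] - dsubw \<tau> j v) []"
    using Cons by simp
  also have "\<dots> = sbr \<tau> (x # v) [F j] - dsubw \<tau> j (x # v)"
    by (simp add: x sbr_F tt_eq wmulc_diff wmulc_single wmulc_add mult.commute) (auto simp: sgnk_def)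
  finally show ?case
    by simp
qed

lemma tt_terms_memD:
  assumes "(\<alpha>, a, s, b) \<in> set (tt_terms \<tau> j v :: ('k::comm_ring_1 \<times> _) list)"
  shows "\<exists>x. v = a @ x # b \<and> s = tt \<tau> (lidx x) j"
  using assms by (induction v arbitrary: a) force+

lemma tt_terms_snoc:
  "tt_terms \<tau> j (u @ [x]) =
     map (\<lambda>(\<alpha>, a, s, b). (\<alpha> * sgnk (j \<in> \<tau> \<and> ldeg \<tau> x), a, s, b @ [x])) (tt_terms \<tau> j u)
     @ [(1, u, tt \<tau> (lidx x) j, []) :: 'k::comm_ring_1 \<times> _]"
  by (induction u) (auto simp: sgnk_conj_mult wdeg_def)

lemma tt_terms_butlast_memD:
  assumes "(\<alpha>, a, s, b) \<in> set (butlast (tt_terms \<tau> j v) :: ('k::comm_ring_1 \<times> _) list)"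
  shows "b \<noteq> []"
proof -
  obtain u x where "v = u @ [x]"
    using assms by (cases v rule: rev_cases) auto
  then show ?thesis
    using assms by (auto simp: tt_terms_snoc butlast_append)
qed

lemma congr_eval_term:
  "congr r f g S w \<longleftrightarrow> (\<exists>L.
      (\<forall>(\<alpha>, a, s, b)\<in>set L. wordX r a \<and> wordX r b \<and> s \<in> S \<and> dlless (a @ lead s @ b) w)
    \<and> f - g = sum_list (map eval_term L))"
  by (simp add: congr_def eval_term_def)

lemma congr_diffI: "congr r (f - g) 0 S w \<Longrightarrow> congr r f g S w"
  by (simp add: congr_def)

lemma congr_0_sum_list:
  assumes "\<And>\<alpha> a s b. (\<alpha>, a, s, b) \<in> set L \<Longrightarrow> wordX r a \<and> wordX r b \<and> s \<in> S \<and> dlless (a @ lead s @ b) w"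
  shows "congr r (sum_list (map eval_term L)) 0 S w"
  unfolding congr_eval_term using assms by (auto intro!: exI[of _ L])

lemma congr_0_add: "congr r f 0 S w \<Longrightarrow> congr r g 0 S w \<Longrightarrow> congr r (f + g) 0 S w"
  unfolding congr_eval_term by (metis (no_types, lifting) Un_iff diff_zero map_append set_append sum_list_append)

lemma congr_0_sum: "(\<And>x. x \<in> X \<Longrightarrow> congr r (f x) 0 S w) \<Longrightarrow> congr r (\<Sum>x\<in>X. f x) 0 S w"
proof (induction X rule: infinite_finite_induct)
  case (infinite X)
  then show ?case using congr_0_sum_list[of "[]"] by simp
next
  case empty
  then show ?case using congr_0_sum_list[of "[]"] by simp
qed (simp add: congr_0_add)

lemma congr_0_scale:
  fixes f :: "'k::comm_ring_1 fa"
  assumes "congr r f 0 S w"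
  shows "congr r (wmulc \<gamma> [] f []) 0 S w"
proof -
  obtain L :: "('k \<times> word \<times> 'k fa \<times> word) list"
    where L: "\<forall>(\<alpha>, a, s, b)\<in>set L. wordX r a \<and> wordX r b \<and> s \<in> S \<and> dlless (a @ lead s @ b) w"
      "f = sum_list (map eval_term L)"
    using assms by (auto simp: congr_eval_term)
  let ?L = "map (\<lambda>(\<alpha>, a, s, b). (\<gamma> * \<alpha>, a, s, b)) L"
  have "wmulc \<gamma> [] f [] = sum_list (map eval_term ?L)"
    unfolding L(2) wmulc_sum_list by (simp add: eval_term_def wmulc_wmulc split_def comp_def)
  moreover have "congr r (sum_list (map eval_term ?L)) 0 S w"
    using L(1) by (intro congr_0_sum_list) auto
  ultimately show ?thesis
    by simp
qed

lemma wless_insert_F: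
  assumes "\<forall>y\<in>set L. isE y" "length (a @ x # b) = length L"
    and "wless (a @ x # b) L \<or> (a @ x # b = L \<and> b \<noteq> [])"
  shows "wless (a @ x # F j # b) (L @ [F j])"
  using assms
proof (induction a arbitrary: L)
  case Nil
  then obtain y L' where L: "L = y # L'"
    by (cases L) auto
  show ?case
  proof (cases "x = y")
    case True
    with Nil L lless_irrefl obtain z L'' where "L' = z # L''"
      by (cases L') (auto simp: length_Suc_conv)
    with Nil L True show ?thesis
      by (cases z) (auto simp: lless_def)
  qed (use Nil L in auto)
next
  case (Cons y a)
  then show ?case
    by (cases L) auto
qed

lemma dlless_insert_F:
  assumes "\<forall>y\<in>set L. isE y" "v = a @ x # b" "dlless v L \<or> (v = L \<and> b \<noteq> [])"
  shows "dlless (a @ [x, F j] @ b) (L @ [F j])"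
  using assms wless_insert_F[OF assms(1), of a x b j] by (auto simp: dlless_def)

lemma dlless_F_Cons: "\<forall>y\<in>set L. isE y \<Longrightarrow> L \<noteq> [] \<Longrightarrow> dlless (F j # L) (L @ [F j])"
  by (cases L; cases "hd L") (auto simp: dlless_def lless_def)

lemma congr_0_tt_terms:
  assumes "\<forall>y\<in>set L. isE y" "\<forall>y\<in>set v. isE y" "wordX r v" "j \<in> {1..r}" "Wset r \<tau> A \<subseteq> S"
    and T: "set T \<subseteq> set (tt_terms \<tau> j v)"
    and below: "\<And>\<alpha> a s b. (\<alpha>, a, s, b) \<in> set T \<Longrightarrow> dlless v L \<or> (v = L \<and> b \<noteq> [])"
  shows "congr r (sum_list (map eval_term T)) 0 S (L @ [F j])"
proof (rule congr_0_sum_list)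
  fix \<alpha> a s b
  assume t: "(\<alpha>, a, s, b) \<in> set T"
  then obtain x where v: "v = a @ x # b" and s: "s = tt \<tau> (lidx x) j"
    using T tt_terms_memD by blast
  then obtain k where x: "x = E k"
    using assms(2) by (cases x) auto
  have "dlless (a @ lead s @ b) (L @ [F j])"
    using dlless_insert_F[OF assms(1) v below[OF t]] by (simp add: s x lead_tt)
  moreover have "s \<in> S"
    using assms(3-5) tt_in_Wset[of k r j \<tau> A] by (auto simp: s x v)
  ultimately show "wordX r a \<and> wordX r b \<and> s \<in> S \<and> dlless (a @ lead s @ b) (L @ [F j])"
    using assms(3) v by simp
qed

lemma comp_tt_cases:
  fixes p :: "'k::comm_ring_1 fa"
  assumes "is_comp p (tt \<tau> i j) w c" "F j \<notin> set (lead p)"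
  obtains u where "lead p = u @ [E i]" "w = lead p @ [F j]"
    "c = wmulc 1 [] p [F j] - wmulc 1 u (tt \<tau> i j) []"
  using assms(1) unfolding is_comp_def lead_tt
proof (elim disjE exE conjE)
  fix a b
  assume ab: "lead p @ a = w" "b @ [E i, F j] = w" "length b < length (lead p)"
    and c: "c = wmulc 1 [] p a - wmulc 1 b (tt \<tau> i j) []"
  have "length (lead p @ a) = length (b @ [E i, F j])"
    using ab(1,2) by simp
  with ab(3) have "length a < 2"
    by simp
  moreover have "a \<noteq> []"
  proof
    assume "a = []"
    with ab have "lead p = b @ [E i, F j]"
      by simp
    with assms(2) show False
      by simp
  qed
  ultimately obtain y where "a = [y]"
    by (cases a rule: rev_cases) auto
  with ab have "lead p = b @ [E i]" "a = [F j]"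
    by auto
  with ab c show thesis
    using that by auto
next
  fix a b
  assume "lead p = w" "a @ [E i, F j] @ b = w"
  then have "lead p = a @ [E i, F j] @ b"
    by simp
  with assms(2) show thesis
    by simp
qed

lemma comp_tt_minus_dsub_eq:
  fixes p :: "'k::comm_ring_1 fa"
  assumes E_keys: "\<And>v. v \<in> Poly_Mapping.keys p \<Longrightarrow> \<forall>y\<in>set v. isE y"
    and deg: "\<And>v. v \<in> Poly_Mapping.keys p \<Longrightarrow> wdeg \<tau> v = d"
    and lead: "lead p \<in> Poly_Mapping.keys p" "Poly_Mapping.lookup p (lead p) = 1" "lead p = u @ [E i]"
  shows "wmulc 1 [] p [F j] - wmulc 1 u (tt \<tau> i j) [] - dsub \<tau> j p
    = wmulc (sgnk (d \<and> j \<in> \<tau>)) [F j] p []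
      + (\<Sum>v\<in>Poly_Mapping.keys p - {lead p}.
           wmulc (Poly_Mapping.lookup p v) [] (sum_list (map eval_term (tt_terms \<tau> j v))) [])
      + sum_list (map eval_term (butlast (tt_terms \<tau> j (lead p))))"
proof -
  define \<sigma> :: 'k where "\<sigma> = sgnk (d \<and> j \<in> \<tau>)"
  define D :: "word \<Rightarrow> 'k fa" where "D v = sum_list (map eval_term (tt_terms \<tau> j v))" for v
  have "wmulc 1 [] p [F j] - wmulc \<sigma> [F j] p [] - dsub \<tau> j p
      = (\<Sum>v\<in>Poly_Mapping.keys p. Poly_Mapping.single (v @ [F j]) (1 * Poly_Mapping.lookup p v)
          - Poly_Mapping.single ([F j] @ v) (\<sigma> * Poly_Mapping.lookup p v)
          - wmulc (Poly_Mapping.lookup p v) [] (dsubw \<tau> j v) [])"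
    by (simp add: wmulc_def dsub_def sum_subtractf)
  also have "\<dots> = (\<Sum>v\<in>Poly_Mapping.keys p.
      wmulc (Poly_Mapping.lookup p v) [] (sbr \<tau> v [F j] - dsubw \<tau> j v) [])"
    by (rule sum.cong) (simp_all add: sbr_F wmulc_diff wmulc_single deg \<sigma>_def mult.commute)
  also have "\<dots> = (\<Sum>v\<in>Poly_Mapping.keys p. wmulc (Poly_Mapping.lookup p v) [] (D v) [])"
    using E_keys by (simp add: D_def sbr_F_eq_dsubw_plus_tt_terms)
  also have "\<dots> = D (lead p) + (\<Sum>v\<in>Poly_Mapping.keys p - {lead p}. wmulc (Poly_Mapping.lookup p v) [] (D v) [])"
    using lead(1,2) by (simp add: sum.remove)
  also have "D (lead p) = sum_list (map eval_term (butlast (tt_terms \<tau> j (lead p)))) + wmulc 1 u (tt \<tau> i j) []"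
    unfolding D_def lead(3) by (simp add: tt_terms_snoc)
  finally show ?thesis
    by (simp add: D_def \<sigma>_def algebra_simps)
qed

lemma congr_comp_tt_dsub:
  fixes p :: "'k::comm_ring_1 fa"
  assumes "inAE r p" "homog \<tau> p" "monic p" "lead p = u @ [E i]" "j \<in> {1..r}"
  shows "congr r (wmulc 1 [] p [F j] - wmulc 1 u (tt \<tau> i j) []) (dsub \<tau> j p)
    ({p} \<union> Wset r \<tau> A) (lead p @ [F j])"
proof -
  let ?S = "{p} \<union> Wset r \<tau> A" and ?w = "lead p @ [F j]"
  have p: "p \<noteq> 0" "Poly_Mapping.lookup p (lead p) = 1"
    using \<open>monic p\<close> by (auto simp: monic_def)
  have keys: "wordX r v" "\<forall>y\<in>set v. isE y" if "v \<in> Poly_Mapping.keys p" for v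
    using \<open>inAE r p\<close> that by (auto simp: inAE_def)
  note lead = lead_in_keys[OF p(1)] keys[OF lead_in_keys[OF p(1)]]
  obtain d where deg: "\<And>v. v \<in> Poly_Mapping.keys p \<Longrightarrow> wdeg \<tau> v = d"
    using \<open>homog \<tau> p\<close> by (auto simp: homog_def)
  have "dlless (F j # lead p) ?w"
    using \<open>lead p = u @ [E i]\<close> by (intro dlless_F_Cons[OF lead(3)]) simp
  then have fp: "congr r (wmulc (sgnk (d \<and> j \<in> \<tau>)) [F j] p []) 0 ?S ?w"
    using congr_0_sum_list[of "[(sgnk (d \<and> j \<in> \<tau>), [F j], p, [])]"] \<open>j \<in> {1..r}\<close> by auto
  have lower: "congr r (wmulc (Poly_Mapping.lookup p v) [] (sum_list (map eval_term (tt_terms \<tau> j v))) []) 0 ?S ?w"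
    if "v \<in> Poly_Mapping.keys p - {lead p}" for v
    using that dlless_lead[OF p(1), of v]
    by (intro congr_0_scale congr_0_tt_terms[OF lead(3) keys(2) keys(1) \<open>j \<in> {1..r}\<close> Un_upper2]) auto
  have top: "congr r (sum_list (map eval_term (butlast (tt_terms \<tau> j (lead p))))) 0 ?S ?w"
  proof (rule congr_0_tt_terms[OF lead(3) lead(3) lead(2) \<open>j \<in> {1..r}\<close> Un_upper2])
    show "set (butlast (tt_terms \<tau> j (lead p))) \<subseteq> set (tt_terms \<tau> j (lead p))"
      by (auto dest: in_set_butlastD)
  qed (simp add: tt_terms_butlast_memD)
  have "congr r (wmulc 1 [] p [F j] - wmulc 1 u (tt \<tau> i j) [] - dsub \<tau> j p) 0 ?S ?w"
    using congr_0_add[OF congr_0_add[OF fp congr_0_sum[of "Poly_Mapping.keys p - {lead p}", OF lower]] top]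
    by (simp only: comp_tt_minus_dsub_eq[OF keys(2) deg lead(1) p(2) \<open>lead p = u @ [E i]\<close>])
  then show ?thesis
    by (rule congr_diffI)
qed

theorem lemma3p1:
  fixes p c :: "'k::field fa" and r :: nat and \<tau> :: "nat set" and A :: "nat \<Rightarrow> nat \<Rightarrow> int"
    and i j :: nat and w :: word
  assumes "(2::'k) \<noteq> 0" and "(3::'k) \<noteq> 0"
    and "gcm r \<tau> A"
    and "i \<in> {1..r}" and "j \<in> {1..r}"
    and "inAE r p" and "homog \<tau> p" and "monic p"
    and "is_comp p (tt \<tau> i j) w c"
  shows "congr r c (dsub \<tau> j p) ({p} \<union> Wset r \<tau> A) w"
proof -
  have "lead p \<in> Poly_Mapping.keys p"
    using \<open>monic p\<close> lead_in_keys by (auto simp: monic_def)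
  then have "\<forall>y\<in>set (lead p). isE y"
    using \<open>inAE r p\<close> by (simp add: inAE_def)
  then have "F j \<notin> set (lead p)"
    by auto
  with \<open>is_comp p (tt \<tau> i j) w c\<close> obtain u where "lead p = u @ [E i]" "w = lead p @ [F j]"
    "c = wmulc 1 [] p [F j] - wmulc 1 u (tt \<tau> i j) []"
    by (rule comp_tt_cases)
  then show ?thesis
    using congr_comp_tt_dsub[OF \<open>inAE r p\<close> \<open>homog \<tau> p\<close> \<open>monic p\<close> _ \<open>j \<in> {1..r}\<close>] by simp
qed

end
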